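(* Let $n,m,T$ be positive integers, $\epsilon\ge 0$, and let $x(0),\dots,x(T)\in\mathbb{R}^n$ and $u(0),\dots,u(T-1)\in\mathbb{R}^m$ be given data, with $X_1:=[x(1)\ \cdots\ x(T)]$, $X_0:=[x(0)\ \cdots\ x(T-1)]$, $U_0:=[u(0)\ \cdots\ u(T-1)]$. Define $$\mathcal{C}:=\Big\{(A,B)\in\mathbb{R}^{n\times n}\times\mathbb{R}^{n\times m}:\ \begin{bmatrix} I & A & B\end{bmatrix}\begin{bmatrix} I & X_1\\ 0 & -X_0\\ 0 & -U_0\end{bmatrix}\begin{bmatrix} T\epsilon I & 0\\ 0 & -I\end{bmatrix}\begin{bmatrix} I & X_1\\ 0 & -X_0\\ 0 & -U_0\end{bmatrix}^\top\begin{bmatrix} I & A & B\end{bmatrix}^\top\succeq 0\Big\},$$ and, for $i\in\{0,\dots,T-1\}$, $$\mathcal{C}_i:=\{(A,B)\in\mathbb{R}^{n\times n}\times\mathbb{R}^{n\times m}:\ \epsilon I-(x(i+1)-Ax(i)-Bu(i))(x(i+1)-Ax(i)-Bu(i))^\top\succeq 0\},$$ and $\mathcal{I}:=\bigcap_{i=0}^{T-1}\mathcal{C}_i$. Then $\mathcal{I}\subseteq\mathcal{C}$.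
   Context: $\succeq 0$ denotes positive semidefiniteness. Equivalently, $\mathcal{C}$ is the set of $(A,B)$ for which there exists $D\in\mathbb{R}^{n\times T}$ with $X_1=AX_0+BU_0+D$ and $DD^\top\preceq T\epsilon I$, and $\mathcal{C}_i$ is the set of $(A,B)$ for which $d:=x(i+1)-Ax(i)-Bu(i)$ satisfies $|d|^2\le\epsilon$. *)

theory Defs
  imports "Jordan_Normal_Form.Matrix"
begin

definition psd :: "real mat \<Rightarrow> bool" where
  "psd M \<longleftrightarrow> M \<in> carrier_mat (dim_row M) (dim_row M) \<and> M = transpose_mat M \<and>
     (\<forall>v \<in> carrier_vec (dim_row M). v \<bullet> (M *\<^sub>v v) \<ge> 0)"

definition append_cols :: "real mat \<Rightarrow> real mat \<Rightarrow> real mat" (infixr \<open>@\<^sub>c\<close> 65) where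
  "A @\<^sub>c B = transpose_mat (transpose_mat A @\<^sub>r transpose_mat B)"

definition X1 :: "nat \<Rightarrow> nat \<Rightarrow> (nat \<Rightarrow> real vec) \<Rightarrow> real mat" where
  "X1 n T x = mat_of_cols n (map x [1..<T+1])"
definition X0 :: "nat \<Rightarrow> nat \<Rightarrow> (nat \<Rightarrow> real vec) \<Rightarrow> real mat" where
  "X0 n T x = mat_of_cols n (map x [0..<T])"
definition U0 :: "nat \<Rightarrow> nat \<Rightarrow> (nat \<Rightarrow> real vec) \<Rightarrow> real mat" where
  "U0 m T u = mat_of_cols m (map u [0..<T])"

definition setC :: "nat \<Rightarrow> nat \<Rightarrow> nat \<Rightarrow> real \<Rightarrow> (nat \<Rightarrow> real vec) \<Rightarrow> (nat \<Rightarrow> real vec)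
    \<Rightarrow> (real mat \<times> real mat) set" where
  "setC n m T \<epsilon> x u = {(A, B). A \<in> carrier_mat n n \<and> B \<in> carrier_mat n m \<and>
     (let IAB = (1\<^sub>m n @\<^sub>c A @\<^sub>c B);
          N = four_block_mat (1\<^sub>m n) (X1 n T x)
                (0\<^sub>m (n + m) n) (- (X0 n T x @\<^sub>r U0 m T u));
          Phi = four_block_mat ((real T * \<epsilon>) \<cdot>\<^sub>m 1\<^sub>m n) (0\<^sub>m n T) (0\<^sub>m T n) (- 1\<^sub>m T)
      in psd (IAB * N * Phi * transpose_mat N * transpose_mat IAB))}"

definition setCi :: "nat \<Rightarrow> nat \<Rightarrow> real \<Rightarrow> (nat \<Rightarrow> real vec) \<Rightarrow> (nat \<Rightarrow> real vec) \<Rightarrow> nat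
    \<Rightarrow> (real mat \<times> real mat) set" where
  "setCi n m \<epsilon> x u i = {(A, B). A \<in> carrier_mat n n \<and> B \<in> carrier_mat n m \<and>
     (let d = x (i + 1) - A *\<^sub>v x i - B *\<^sub>v u i
      in psd (\<epsilon> \<cdot>\<^sub>m 1\<^sub>m n - mat_of_cols n [d] * transpose_mat (mat_of_cols n [d])))}"

end

theory Submission
  imports Defs
begin

(* Put D := X1 - A X0 - B U0, whose t-th column is the residual d(t) = x(t+1) - A x(t) - B u(t).
   Block multiplication gives [I A B] N = [I D], so the matrix defining C is T eps I - D D^T, with
   quadratic form v |-> T eps |v|^2 - sum_t (d(t) . v)^2.  Likewise the matrix defining C_t has
   quadratic form eps |v|^2 - (d(t) . v)^2, so membership in every C_t bounds each summand by
   eps |v|^2 and the sum by T eps |v|^2. *)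

lemma dim_row_append_cols [simp]: "dim_row (X @\<^sub>c Y) = dim_row X"
  and dim_col_append_cols [simp]: "dim_col (X @\<^sub>c Y) = dim_col X + dim_col Y"
  unfolding append_cols_def append_rows_def by auto

lemma append_cols_carrier [simp, intro]:
  "X \<in> carrier_mat r c1 \<Longrightarrow> Y \<in> carrier_mat r c2 \<Longrightarrow> X @\<^sub>c Y \<in> carrier_mat r (c1 + c2)"
  by auto

lemma transpose_append_cols: "transpose_mat (X @\<^sub>c Y) = transpose_mat X @\<^sub>r transpose_mat Y"
  unfolding append_cols_def by simp

lemma index_append_cols:
  assumes "X \<in> carrier_mat r c1" "Y \<in> carrier_mat r c2" "i < r" "j < c1 + c2"
  shows "(X @\<^sub>c Y) $$ (i, j) = (if j < c1 then X $$ (i, j) else Y $$ (i, j - c1))"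
  using assms unfolding append_cols_def append_rows_def by auto

lemma row_append_cols:
  assumes "X \<in> carrier_mat r c1" "Y \<in> carrier_mat r c2" "i < r"
  shows "row (X @\<^sub>c Y) i = row X i @\<^sub>v row Y i"
  using assms by (intro eq_vecI) (auto simp: index_append_cols)

lemma col_append_rows:
  assumes "X \<in> carrier_mat r1 c" "Y \<in> carrier_mat r2 c" "j < c"
  shows "col (X @\<^sub>r Y) j = col X j @\<^sub>v col Y j"
  using assms unfolding append_rows_def by (subst col_four_block_mat(1)[of _ r1 c _ 0 _ r2]) auto

lemma append_cols_mult_append_rows:
  assumes X: "X \<in> carrier_mat r c1" and Y: "Y \<in> carrier_mat r c2"
    and P: "P \<in> carrier_mat c1 k" and Q: "Q \<in> carrier_mat c2 k"
  shows "(X @\<^sub>c Y) * (P @\<^sub>r Q) = X * P + Y * Q"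
proof (rule eq_matI)
  fix i j assume "i < dim_row (X * P + Y * Q)" "j < dim_col (X * P + Y * Q)"
  with assms have i: "i < r" and j: "j < k" by auto
  have "((X @\<^sub>c Y) * (P @\<^sub>r Q)) $$ (i, j) = (row X i @\<^sub>v row Y i) \<bullet> (col P j @\<^sub>v col Q j)"
    using carrier_append_rows[OF P Q] X Y i j
    by (simp add: row_append_cols[OF X Y i] col_append_rows[OF P Q j])
  also have "\<dots> = row X i \<bullet> col P j + row Y i \<bullet> col Q j"
    using assms i j by (intro scalar_prod_append[of _ c1 _ c2]) auto
  finally show "((X @\<^sub>c Y) * (P @\<^sub>r Q)) $$ (i, j) = (X * P + Y * Q) $$ (i, j)"
    using assms i j by simp
qed (use assms in \<open>auto simp: append_rows_def\<close>)

lemma append_cols_mult_four_block_mat: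
  assumes X: "X \<in> carrier_mat r c1" and Y: "Y \<in> carrier_mat r c2"
    and P: "P \<in> carrier_mat c1 k1" and Q: "Q \<in> carrier_mat c1 k2"
    and R: "R \<in> carrier_mat c2 k1" and S: "S \<in> carrier_mat c2 k2"
  shows "(X @\<^sub>c Y) * four_block_mat P Q R S = (X * P + Y * R) @\<^sub>c (X * Q + Y * S)"
proof (rule eq_matI)
  fix i j assume "i < dim_row ((X * P + Y * R) @\<^sub>c (X * Q + Y * S))"
    "j < dim_col ((X * P + Y * R) @\<^sub>c (X * Q + Y * S))"
  with assms have i: "i < r" and j: "j < k1 + k2" by auto
  have "((X @\<^sub>c Y) * four_block_mat P Q R S) $$ (i, j) =
      (row X i @\<^sub>v row Y i) \<bullet> (if j < k1 then col P j @\<^sub>v col R j else col Q (j - k1) @\<^sub>v col S (j - k1))"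
    using assms i j by (simp add: row_append_cols[OF X Y i] col_four_block_mat)
  also have "\<dots> = (if j < k1 then row X i \<bullet> col P j + row Y i \<bullet> col R j
      else row X i \<bullet> col Q (j - k1) + row Y i \<bullet> col S (j - k1))"
    using assms i j by (auto intro!: scalar_prod_append[of _ c1 _ c2])
  finally show "((X @\<^sub>c Y) * four_block_mat P Q R S) $$ (i, j) =
      ((X * P + Y * R) @\<^sub>c (X * Q + Y * S)) $$ (i, j)"
    using assms i j by (simp add: index_append_cols[of _ r k1 _ k2])
qed (use assms in auto)

lemma transpose_mult_vec_eq_col_scalar_prods:
  assumes "D \<in> carrier_mat n k" "v \<in> carrier_vec n"
  shows "transpose_mat D *\<^sub>v v = vec k (\<lambda>j. col D j \<bullet> v)"
  using assms by (intro eq_vecI) auto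

lemma smult_one_mat_mult_vec:
  assumes v: "v \<in> carrier_vec n"
  shows "(c \<cdot>\<^sub>m 1\<^sub>m n) *\<^sub>v v = c \<cdot>\<^sub>v (v :: 'a :: comm_ring_1 vec)"
proof (rule eq_vecI)
  fix i assume "i < dim_vec (c \<cdot>\<^sub>v v)"
  with v have "i < n" by simp
  moreover from this have "row (c \<cdot>\<^sub>m 1\<^sub>m n) i = c \<cdot>\<^sub>v unit_vec n i"
    by (intro eq_vecI) auto
  ultimately show "((c \<cdot>\<^sub>m 1\<^sub>m n) *\<^sub>v v) $ i = (c \<cdot>\<^sub>v v) $ i"
    using v by simp
qed (use v in simp)

lemma quadratic_form_smult_one_minus_mult_transpose:
  fixes D :: "real mat"
  assumes D: "D \<in> carrier_mat n k" and v: "v \<in> carrier_vec n"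
  shows "v \<bullet> ((c \<cdot>\<^sub>m 1\<^sub>m n - D * transpose_mat D) *\<^sub>v v) = c * (v \<bullet> v) - (\<Sum>j<k. (col D j \<bullet> v)\<^sup>2)"
proof -
  let ?w = "transpose_mat D *\<^sub>v v"
  have "(c \<cdot>\<^sub>m 1\<^sub>m n - D * transpose_mat D) *\<^sub>v v = c \<cdot>\<^sub>v v - D *\<^sub>v ?w"
    using D v minus_mult_distrib_mat_vec[of "c \<cdot>\<^sub>m 1\<^sub>m n" n n "D * transpose_mat D" v]
    by (simp add: assoc_mult_mat_vec[of _ n k] smult_one_mat_mult_vec)
  then have "v \<bullet> ((c \<cdot>\<^sub>m 1\<^sub>m n - D * transpose_mat D) *\<^sub>v v) = c * (v \<bullet> v) - v \<bullet> (D *\<^sub>v ?w)"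
    using D v by (simp add: scalar_prod_minus_distrib[of _ n])
  also have "v \<bullet> (D *\<^sub>v ?w) = ?w \<bullet> ?w"
    using D v by (subst transpose_vec_mult_scalar[symmetric, of _ n k]) auto
  also have "\<dots> = (\<Sum>j<k. (col D j \<bullet> v)\<^sup>2)"
    using D v by (simp add: transpose_mult_vec_eq_col_scalar_prods scalar_prod_def power2_eq_square lessThan_atLeast0)
  finally show ?thesis .
qed

lemma psd_smult_one_minus_mult_transpose_iff:
  fixes D :: "real mat"
  assumes D: "D \<in> carrier_mat n k"
  shows "psd (c \<cdot>\<^sub>m 1\<^sub>m n - D * transpose_mat D) \<longleftrightarrow>
    (\<forall>v \<in> carrier_vec n. (\<Sum>j<k. (col D j \<bullet> v)\<^sup>2) \<le> c * (v \<bullet> v))"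
proof -
  have "transpose_mat (c \<cdot>\<^sub>m 1\<^sub>m n - D * transpose_mat D) = c \<cdot>\<^sub>m 1\<^sub>m n - D * transpose_mat D"
    using D by (intro eq_matI) (auto simp: transpose_mult[of _ n k] comm_scalar_prod[of _ k])
  then show ?thesis
    using D by (auto simp: psd_def quadratic_form_smult_one_minus_mult_transpose)
qed

lemma block_constraint_matrix_eq:
  fixes A B X1 X0 U0 :: "real mat" and c :: real
  assumes A: "A \<in> carrier_mat n n" and B: "B \<in> carrier_mat n m"
    and X1: "X1 \<in> carrier_mat n T" and X0: "X0 \<in> carrier_mat n T" and U0: "U0 \<in> carrier_mat m T"
  defines "IAB \<equiv> 1\<^sub>m n @\<^sub>c A @\<^sub>c B"
    and "N \<equiv> four_block_mat (1\<^sub>m n) X1 (0\<^sub>m (n + m) n) (- (X0 @\<^sub>r U0))"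
    and "Phi \<equiv> four_block_mat (c \<cdot>\<^sub>m 1\<^sub>m n) (0\<^sub>m n T) (0\<^sub>m T n) (- 1\<^sub>m T)"
  shows "IAB * N * Phi * transpose_mat N * transpose_mat IAB =
    c \<cdot>\<^sub>m 1\<^sub>m n - (X1 - (A * X0 + B * U0)) * transpose_mat (X1 - (A * X0 + B * U0))"
proof -
  define D where "D = X1 - (A * X0 + B * U0)"
  have AB: "A @\<^sub>c B \<in> carrier_mat n (n + m)" using A B by auto
  have XU: "X0 @\<^sub>r U0 \<in> carrier_mat (n + m) T" using X0 U0 by auto
  have D: "D \<in> carrier_mat n T" unfolding D_def using A B X1 X0 U0 by auto
  have IAB: "IAB \<in> carrier_mat n (n + (n + m))" unfolding IAB_def using AB by auto
  have N: "N \<in> carrier_mat (n + (n + m)) (n + T)" unfolding N_def using X1 XU by auto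
  have Phi: "Phi \<in> carrier_mat (n + T) (n + T)" unfolding Phi_def by auto
  have "IAB * N = (1\<^sub>m n * 1\<^sub>m n + (A @\<^sub>c B) * 0\<^sub>m (n + m) n) @\<^sub>c
      (1\<^sub>m n * X1 + (A @\<^sub>c B) * - (X0 @\<^sub>r U0))"
    unfolding IAB_def N_def using AB X1 XU by (intro append_cols_mult_four_block_mat) auto
  also have "(A @\<^sub>c B) * - (X0 @\<^sub>r U0) = - (A * X0 + B * U0)"
    using append_cols_mult_append_rows[OF A B X0 U0] AB XU
    by (subst uminus_mult_right_mat) auto
  finally have IAB_N: "IAB * N = 1\<^sub>m n @\<^sub>c D"
    unfolding D_def using X1 X0 U0 A B by (simp add: minus_add_uminus_mat[of X1 n T])
  have "(1\<^sub>m n @\<^sub>c D) * Phi = (1\<^sub>m n * (c \<cdot>\<^sub>m 1\<^sub>m n) + D * 0\<^sub>m T n) @\<^sub>c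
      (1\<^sub>m n * 0\<^sub>m n T + D * - 1\<^sub>m T)"
    unfolding Phi_def using D by (intro append_cols_mult_four_block_mat) auto
  then have IAB_N_Phi: "IAB * N * Phi = (c \<cdot>\<^sub>m 1\<^sub>m n) @\<^sub>c (- D)"
    unfolding IAB_N using D by simp
  have "IAB * N * Phi * transpose_mat N * transpose_mat IAB =
      (IAB * N * Phi) * transpose_mat (IAB * N)"
    using IAB N Phi by (simp add: transpose_mult[OF IAB N] assoc_mult_mat[of _ n "n + T" _ "n + (n + m)"])
  also have "\<dots> = (c \<cdot>\<^sub>m 1\<^sub>m n) * 1\<^sub>m n + (- D) * transpose_mat D"
    unfolding IAB_N_Phi unfolding IAB_N transpose_append_cols transpose_one using D
    by (intro append_cols_mult_append_rows) auto
  finally show ?thesis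
    unfolding D_def[symmetric] using D by (simp add: minus_add_uminus_mat[of _ n n])
qed

lemma X1_carrier: "X1 n T x \<in> carrier_mat n T"
  and X0_carrier: "X0 n T x \<in> carrier_mat n T"
  and U0_carrier: "U0 m T u \<in> carrier_mat m T"
  unfolding X1_def X0_def U0_def
  using mat_of_cols_carrier(1)[of n "map x [1..<T+1]"] mat_of_cols_carrier(1)[of n "map x [0..<T]"]
    mat_of_cols_carrier(1)[of m "map u [0..<T]"]
  by (simp_all del: upt_Suc)

lemma col_data_residual:
  assumes A: "A \<in> carrier_mat n n" and B: "B \<in> carrier_mat n m"
    and x: "\<And>i. i \<le> T \<Longrightarrow> x i \<in> carrier_vec n" and u: "\<And>i. i < T \<Longrightarrow> u i \<in> carrier_vec m"
    and t: "t < T"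
  shows "col (X1 n T x - (A * X0 n T x + B * U0 m T u)) t = x (t + 1) - A *\<^sub>v x t - B *\<^sub>v u t"
proof -
  have "col (X1 n T x - (A * X0 n T x + B * U0 m T u)) t =
      col (X1 n T x) t - (A *\<^sub>v col (X0 n T x) t + B *\<^sub>v col (U0 m T u) t)"
    using A B t X1_carrier[of n T x] X0_carrier[of n T x] U0_carrier[of m T u]
    by (intro eq_vecI) auto
  moreover have "col (X1 n T x) t = x (t + 1)"
    unfolding X1_def using t x[of "t + 1"] by (simp del: upt_Suc add: nth_append)
  moreover have "col (X0 n T x) t = x t" "col (U0 m T u) t = u t"
    unfolding X0_def U0_def using t x[of t] u[of t] by simp_all
  ultimately show ?thesis
    using A B t x[of t] x[of "t + 1"] u[of t] by (intro eq_vecI) auto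
qed

lemma setCi_residual_bound:
  assumes "(A, B) \<in> setCi n m \<epsilon> x u i"
    and "x i \<in> carrier_vec n" "x (i + 1) \<in> carrier_vec n" "u i \<in> carrier_vec m" "v \<in> carrier_vec n"
  shows "((x (i + 1) - A *\<^sub>v x i - B *\<^sub>v u i) \<bullet> v)\<^sup>2 \<le> \<epsilon> * (v \<bullet> v)"
proof -
  define d where "d = x (i + 1) - A *\<^sub>v x i - B *\<^sub>v u i"
  have A: "A \<in> carrier_mat n n" and B: "B \<in> carrier_mat n m"
    and "psd (\<epsilon> \<cdot>\<^sub>m 1\<^sub>m n - mat_of_cols n [d] * transpose_mat (mat_of_cols n [d]))"
    using assms(1) unfolding setCi_def d_def Let_def by auto
  moreover have "d \<in> carrier_vec n" unfolding d_def using assms A B by auto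
  ultimately show ?thesis
    using assms(5) unfolding d_def[symmetric]
    by (subst (asm) psd_smult_one_minus_mult_transpose_iff[of _ n 1]) auto
qed

theorem proposition3:
  fixes n m T :: nat and \<epsilon> :: real and x u :: "nat \<Rightarrow> real vec"
  assumes "n > 0" and "m > 0" and "T > 0" and "\<epsilon> \<ge> 0"
    and "\<And>i. i \<le> T \<Longrightarrow> x i \<in> carrier_vec n"
    and "\<And>i. i < T \<Longrightarrow> u i \<in> carrier_vec m"
  shows "(\<Inter>i \<in> {0..<T}. setCi n m \<epsilon> x u i) \<subseteq> setC n m T \<epsilon> x u"
proof (clarify)
  fix A B assume AB: "(A, B) \<in> (\<Inter>i \<in> {0..<T}. setCi n m \<epsilon> x u i)"
  then have A: "A \<in> carrier_mat n n" and B: "B \<in> carrier_mat n m"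
    using \<open>T > 0\<close> unfolding setCi_def by auto
  define D where "D = X1 n T x - (A * X0 n T x + B * U0 m T u)"
  have D: "D \<in> carrier_mat n T"
    unfolding D_def using A B X1_carrier[of n T x] X0_carrier[of n T x] U0_carrier[of m T u] by auto
  have residual_bound: "((x (t + 1) - A *\<^sub>v x t - B *\<^sub>v u t) \<bullet> v)\<^sup>2 \<le> \<epsilon> * (v \<bullet> v)"
    if "t < T" "v \<in> carrier_vec n" for t v
    using AB that assms(5,6) by (intro setCi_residual_bound) auto
  have "(\<Sum>t<T. (col D t \<bullet> v)\<^sup>2) \<le> real T * \<epsilon> * (v \<bullet> v)" if v: "v \<in> carrier_vec n" for v
  proof -
    have "(\<Sum>t<T. (col D t \<bullet> v)\<^sup>2) \<le> (\<Sum>t<T. \<epsilon> * (v \<bullet> v))"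
      unfolding D_def using assms(5,6) v
      by (intro sum_mono) (use residual_bound in \<open>simp add: col_data_residual[OF A B]\<close>)
    then show ?thesis by simp
  qed
  then have "psd ((real T * \<epsilon>) \<cdot>\<^sub>m 1\<^sub>m n - D * transpose_mat D)"
    using psd_smult_one_minus_mult_transpose_iff[OF D] by blast
  then show "(A, B) \<in> setC n m T \<epsilon> x u"
    unfolding setC_def Let_def D_def
    using A B block_constraint_matrix_eq[OF A B X1_carrier X0_carrier U0_carrier] by simp
qed

end
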